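(* Let $\bar x\in S$ be an isolated point of $S$. Suppose that $\nabla f(\bar x)d\ge0$ for all $d\in T_\Phi(\bar x)$, and there exists $\lambda\in\mathbb{R}^m$ with $\nabla_xL(\bar x,\lambda)=0$ such that for every $d\in C(\bar x)\setminus\{0\}$: (i) $\langle\lambda,v\rangle<0$ for all $v\in\nabla g(\bar x)\big(T''_\Phi(\bar x;d)\cap(\{d\}^\perp\setminus\{0\})\big)$; (ii) $\nabla^2_{xx}L(\bar x,\lambda)(d,d)-\sigma_{\nabla g(\bar x)(T^2_\Phi(\bar x;d)\cap\{d\}^\perp)+\nabla^2g(\bar x)(d,d)}(\lambda)>0$. Then $\bar x$ is a local second-order weak sharp minimizer of problem (P).
   Context: Standing setting: $f:\mathbb{R}^n\to\mathbb{R}$, $g:\mathbb{R}^n\to\mathbb{R}^m$ twice continuously differentiable, $K\subset\mathbb{R}^m$ closed; (P) is $\min f(x)$ s.t. $g(x)\in K$; $\Phi:=\{x:g(x)\in K\}$; $S$ is the (nonempty) set of optimal solutions; $L(x,\lambda):=f(x)+\langle g(x),\lambda\rangle$. $\bar x\in\Phi$ is a local second-order weak sharp minimizer if there are $\kappa,\delta>0$ with $f(x)\ge f(\bar x)+\kappa[\mathrm{dist}(x,S)]^2$ for all $x\in\Phi\cap B_\delta(\bar x)$. For a closed set $A$ and $\bar x\in A$: $T_A(\bar x):=\{d:\exists t_k\downarrow0,d_k\to d,\bar x+t_kd_k\in A\}$; for $d\in T_A(\bar x)$, $T^2_A(\bar x;d):=\{w:\exists t_k\downarrow0,w_k\to w,\bar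 x+t_kd+\tfrac12t_k^2w_k\in A\}$ and $T''_A(\bar x;d):=\{w:\exists(t_k,r_k)\downarrow(0,0),t_k/r_k\to0,w_k\to w,\bar x+t_kd+\tfrac12t_kr_kw_k\in A\}$. $C(x):=\{d:\nabla g(x)d\in T_K(g(x)),\nabla f(x)d\le0\}$. $\{d\}^\perp$ is the orthogonal complement of $d$; $\sigma_A(\lambda):=\sup_{u\in A}\langle\lambda,u\rangle$ ($-\infty$ if $A=\emptyset$); $\nabla^2g(x)(d,d):=(d^T\nabla^2g_i(x)d)_{i=1}^m$; $\nabla g(x)(A):=\{\nabla g(x)u:u\in A\}$. *)

theory Defs
  imports "HOL-Analysis.Analysis"
begin

definition tangent_cone :: "'a::real_normed_vector set \<Rightarrow> 'a \<Rightarrow> 'a set" where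
  "tangent_cone A x = {d. \<exists>t dd. (\<forall>k. t k > 0) \<and> t \<longlonglongrightarrow> 0 \<and> dd \<longlonglongrightarrow> d
                           \<and> (\<forall>k. x + t k *\<^sub>R dd k \<in> A)}"

definition second_tangent_set :: "'a::real_normed_vector set \<Rightarrow> 'a \<Rightarrow> 'a \<Rightarrow> 'a set" where
  "second_tangent_set A x d = {w. \<exists>t ww. (\<forall>k. t k > 0) \<and> t \<longlonglongrightarrow> 0 \<and> ww \<longlonglongrightarrow> w
        \<and> (\<forall>k. x + t k *\<^sub>R d + ((1/2) * (t k)\<^sup>2) *\<^sub>R ww k \<in> A)}"

definition asymp_second_tangent_cone :: "'a::real_normed_vector set \<Rightarrow> 'a \<Rightarrow> 'a \<Rightarrow> 'a set" where
  "asymp_second_tangent_cone A x d = {w. \<exists>t r ww. (\<forall>k. t k > 0 \<and> r k > 0)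
        \<and> t \<longlonglongrightarrow> 0 \<and> r \<longlonglongrightarrow> 0 \<and> (\<lambda>k. t k / r k) \<longlonglongrightarrow> 0 \<and> ww \<longlonglongrightarrow> w
        \<and> (\<forall>k. x + t k *\<^sub>R d + ((1/2) * t k * r k) *\<^sub>R ww k \<in> A)}"

text \<open>Support function sigma_A(lambda), with value -\<infinity> on the empty set.\<close>
definition support_fun :: "'a::real_inner set \<Rightarrow> 'a \<Rightarrow> ereal" where
  "support_fun A l = (SUP u\<in>A. ereal (inner l u))"

definition feasible :: "('n \<Rightarrow> 'm) \<Rightarrow> 'm set \<Rightarrow> 'n set" where
  "feasible g K = {x. g x \<in> K}"

definition optimal_set :: "('n \<Rightarrow> real) \<Rightarrow> ('n \<Rightarrow> 'm) \<Rightarrow> 'm set \<Rightarrow> 'n set" where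
  "optimal_set f g K = {x \<in> feasible g K. \<forall>y \<in> feasible g K. f x \<le> f y}"

definition critical_cone ::
  "('n::real_normed_vector \<Rightarrow>\<^sub>L real) \<Rightarrow> ('n \<Rightarrow>\<^sub>L 'm::real_normed_vector) \<Rightarrow> 'm set \<Rightarrow> 'm \<Rightarrow> 'n set" where
  "critical_cone Dfx Dgx K gx = {d. blinfun_apply Dgx d \<in> tangent_cone K gx \<and> blinfun_apply Dfx d \<le> 0}"

definition local_so_weak_sharp_min ::
  "('n::real_normed_vector \<Rightarrow> real) \<Rightarrow> ('n \<Rightarrow> 'm) \<Rightarrow> 'm set \<Rightarrow> 'n \<Rightarrow> bool" where
  "local_so_weak_sharp_min f g K xb \<longleftrightarrow> xb \<in> feasible g K \<and>
     (\<exists>\<kappa>>0. \<exists>\<delta>>0. \<forall>x \<in> feasible g K \<inter> ball xb \<delta>.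
        f x \<ge> f xb + \<kappa> * (infdist x (optimal_set f g K))\<^sup>2)"

end

theory Submission
  imports Defs
begin

(* If the quadratic growth f x >= f xb + kappa * |x - xb|^2 failed on the feasible set, there would
   be feasible points xb + t_k v_k with t_k -> 0, unit directions v_k -> d and
   f (xb + t_k v_k) - f xb <= o(t_k^2).  The first-order condition and the first-order difference
   quotients make d a nonzero critical direction.  Put w_k = 2 (v_k - d) / t_k: then
   xb + t_k d + t_k^2/2 w_k is feasible, <d, w_k> = - t_k |w_k|^2 / 4, and the second-order Taylor
   expansion gives Df xb w_k + D2f xb d d <= o(1).  If (w_k) has a convergent subsequence, its limit
   lies in T^2(xb; d) and is orthogonal to d, contradicting (ii); otherwise w_k / (1 + |w_k|)
   accumulates at a unit vector of T''(xb; d) orthogonal to d, contradicting (i).  The multiplier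
   rewrites Df xb as - <lambda, Dg xb _>, which is how (i) and (ii) enter.
   Quadratic growth in |x - xb| dominates kappa * dist(x, S)^2. *)

section \<open>Difference quotients and second-order Taylor expansion\<close>

lemma difference_quotient_tendsto:
  fixes g :: "'a::real_normed_vector \<Rightarrow> 'b::real_normed_vector"
  assumes g: "(g has_derivative G) (at x)"
    and t: "\<And>k. t k > 0" "t \<longlonglongrightarrow> 0" and v: "v \<longlonglongrightarrow> d"
  shows "(\<lambda>k. (g (x + t k *\<^sub>R v k) - g x) /\<^sub>R t k) \<longlonglongrightarrow> G d"
proof -
  define N where "N h = norm (g (x + h) - g x - G h) / norm h" for h
  \<comment> \<open>\<open>N 0 = 0\<close> by the convention \<open>x / 0 = 0\<close>, so \<open>N\<close> is continuous at \<open>0\<close> and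
    can be composed with null sequences that hit \<open>0\<close>.\<close>
  have lin: "bounded_linear G" and "N \<midarrow>0\<rightarrow> 0"
    using g unfolding has_derivative_at N_def by auto
  then have "isCont N 0"
    by (simp add: continuous_at N_def)
  moreover have "(\<lambda>k. t k *\<^sub>R v k) \<longlonglongrightarrow> 0"
    using tendsto_scaleR[OF t(2) v] by simp
  ultimately have "(\<lambda>k. N (t k *\<^sub>R v k) * norm (v k)) \<longlonglongrightarrow> N 0 * norm d"
    by (intro tendsto_intros isCont_tendsto_compose[where g=N] v)
  moreover have "norm ((g (x + t k *\<^sub>R v k) - g x) /\<^sub>R t k - G (v k)) = N (t k *\<^sub>R v k) * norm (v k)" for k
  proof (cases "v k = 0")
    case True
    then show ?thesis
      by (simp add: N_def linear_0[OF bounded_linear.linear[OF lin]])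
  next
    case False
    have quotient: "(g (x + t k *\<^sub>R v k) - g x) /\<^sub>R t k - G (v k)
        = (g (x + t k *\<^sub>R v k) - g x - G (t k *\<^sub>R v k)) /\<^sub>R t k"
      using t(1)[of k] by (simp add: linear_scale[OF bounded_linear.linear[OF lin]] scaleR_diff_right)
    have "norm (e /\<^sub>R t k) = norm e / norm (t k *\<^sub>R v k) * norm (v k)" for e :: 'b
      using False t(1)[of k] by (simp add: field_simps)
    then show ?thesis
      unfolding quotient N_def .
  qed
  ultimately have "(\<lambda>k. norm ((g (x + t k *\<^sub>R v k) - g x) /\<^sub>R t k - G (v k))) \<longlonglongrightarrow> 0"
    by (simp add: N_def)
  then have "(\<lambda>k. (g (x + t k *\<^sub>R v k) - g x) /\<^sub>R t k - G (v k)) \<longlonglongrightarrow> 0"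
    by (rule tendsto_norm_zero_cancel)
  from tendsto_add[OF this bounded_linear.tendsto[OF lin v]] show ?thesis
    by simp
qed

lemma tangent_cone_preimage:
  assumes "(g has_derivative G) (at x)" and "d \<in> tangent_cone {y. g y \<in> K} x"
  shows "G d \<in> tangent_cone K (g x)"
proof -
  from assms(2) obtain t v where t: "\<And>k. t k > 0" "t \<longlonglongrightarrow> 0" and v: "v \<longlonglongrightarrow> d"
    and feasible: "\<And>k. g (x + t k *\<^sub>R v k) \<in> K"
    unfolding tangent_cone_def by auto
  have "g x + t k *\<^sub>R ((g (x + t k *\<^sub>R v k) - g x) /\<^sub>R t k) \<in> K" for k
    using feasible[of k] t(1)[of k] by simp
  with difference_quotient_tendsto[OF assms(1) t v] show ?thesis
    unfolding tangent_cone_def using t by blast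
qed

lemma taylor_mean_value:
  fixes f :: "'a::real_normed_vector \<Rightarrow> real" and Df :: "'a \<Rightarrow> 'a \<Rightarrow>\<^sub>L real"
    and D2 :: "'a \<Rightarrow>\<^sub>L 'a \<Rightarrow>\<^sub>L real"
  assumes f: "\<And>y. (f has_derivative Df y) (at y)"
  obtains z where "0 < z" "z < 1"
    "f (x + h) - f x - Df x h - D2 h h / 2 = (Df (x + z *\<^sub>R h) - Df x - D2 (z *\<^sub>R h)) h"
proof -
  define \<phi> where "\<phi> s = f (x + s *\<^sub>R h) - s * Df x h - s\<^sup>2 / 2 * D2 h h" for s
  define \<phi>' where "\<phi>' s = Df (x + s *\<^sub>R h) h - Df x h - s * D2 h h" for s
  have "DERIV \<phi> s :> \<phi>' s" for s
  proof -
    have f_line: "((\<lambda>s. f (x + s *\<^sub>R h)) has_derivative (\<lambda>u. Df (x + s *\<^sub>R h) (u *\<^sub>R h))) (at s)"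
      by (rule has_derivative_compose[OF _ f]) (auto intro!: derivative_eq_intros)
    have "(\<phi> has_derivative (\<lambda>u. Df (x + s *\<^sub>R h) (u *\<^sub>R h) - u * Df x h - (u * (2 * s) / 2) * D2 h h)) (at s)"
      unfolding \<phi>_def by (rule derivative_eq_intros f_line refl)+ (auto simp: algebra_simps)
    then show ?thesis
      unfolding \<phi>'_def has_field_derivative_def
      by (rule has_derivative_eq_rhs) (auto simp: fun_eq_iff blinfun.scaleR_right algebra_simps)
  qed
  then obtain z where "0 < z" "z < 1" "\<phi> 1 - \<phi> 0 = \<phi>' z"
    using MVT2[of 0 1 \<phi> \<phi>'] by auto
  moreover have "\<phi>' z = (Df (x + z *\<^sub>R h) - Df x - D2 (z *\<^sub>R h)) h"
    unfolding \<phi>'_def by (simp add: blinfun.diff_left blinfun.scaleR_left blinfun.scaleR_right)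
  ultimately show ?thesis
    using that by (simp add: \<phi>_def)
qed

lemma taylor_remainder_tendsto:
  fixes f :: "'a::real_normed_vector \<Rightarrow> real" and Df :: "'a \<Rightarrow> 'a \<Rightarrow>\<^sub>L real"
  assumes f: "\<And>y. (f has_derivative Df y) (at y)"
    and Df: "(Df has_derivative blinfun_apply D2) (at x)"
  shows "(\<lambda>h. (f (x + h) - f x - Df x h - D2 h h / 2) / (norm h)\<^sup>2) \<midarrow>0\<rightarrow> 0"
proof (rule LIM_I)
  fix r :: real assume "r > 0"
  with Df obtain s where "s > 0" and s: "\<And>y. norm (y - x) < s \<Longrightarrow>
      norm (Df y - Df x - D2 (y - x)) \<le> r / 2 * norm (y - x)"
    unfolding has_derivative_at_alt by (meson half_gt_zero)
  have bound: "\<bar>f (x + h) - f x - Df x h - D2 h h / 2\<bar> \<le> r / 2 * (norm h)\<^sup>2" if "norm h < s" for h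
  proof -
    obtain z where z: "0 < z" "z < 1"
      and eq: "f (x + h) - f x - Df x h - D2 h h / 2 = (Df (x + z *\<^sub>R h) - Df x - D2 (z *\<^sub>R h)) h"
      using taylor_mean_value[OF f] .
    have zh: "norm (z *\<^sub>R h) \<le> norm h"
      using z by (simp add: mult_left_le_one_le)
    have "\<bar>(Df (x + z *\<^sub>R h) - Df x - D2 (z *\<^sub>R h)) h\<bar> \<le> norm (Df (x + z *\<^sub>R h) - Df x - D2 (z *\<^sub>R h)) * norm h"
      using norm_blinfun by (metis real_norm_def)
    also have "\<dots> \<le> r / 2 * norm (z *\<^sub>R h) * norm h"
      using s[of "x + z *\<^sub>R h"] zh that by (intro mult_right_mono) simp_all
    also have "\<dots> \<le> r / 2 * norm h * norm h"
      using zh \<open>r > 0\<close> by (intro mult_right_mono mult_left_mono) simp_all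
    finally show ?thesis
      by (simp add: eq power2_eq_square)
  qed
  show "\<exists>s>0. \<forall>h. h \<noteq> 0 \<and> norm (h - 0) < s \<longrightarrow>
      norm ((f (x + h) - f x - Df x h - D2 h h / 2) / (norm h)\<^sup>2 - 0) < r"
  proof (intro exI[of _ s] conjI allI impI)
    fix h :: 'a assume h: "h \<noteq> 0 \<and> norm (h - 0) < s"
    then have "\<bar>f (x + h) - f x - Df x h - D2 h h / 2\<bar> / (norm h)\<^sup>2 \<le> r / 2"
      using bound[of h] by (simp add: pos_divide_le_eq)
    also have "\<dots> < r"
      using \<open>r > 0\<close> by simp
    finally show "norm ((f (x + h) - f x - Df x h - D2 h h / 2) / (norm h)\<^sup>2 - 0) < r"
      by (simp add: abs_divide)
  qed (rule \<open>s > 0\<close>)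
qed

lemma second_order_difference_quotient_tendsto:
  fixes f :: "'a::real_normed_vector \<Rightarrow> real" and Df :: "'a \<Rightarrow> 'a \<Rightarrow>\<^sub>L real"
  assumes f: "\<And>y. (f has_derivative Df y) (at y)"
    and Df: "(Df has_derivative blinfun_apply D2) (at x)"
    and t: "\<And>k. t k > 0" "t \<longlonglongrightarrow> 0" and v: "v \<longlonglongrightarrow> d" and critical: "Df x d = 0"
  shows "(\<lambda>k. 2 * (f (x + t k *\<^sub>R v k) - f x) / (t k)\<^sup>2 - Df x ((2 / t k) *\<^sub>R (v k - d)))
           \<longlonglongrightarrow> D2 d d"
proof -
  define R where "R h = (f (x + h) - f x - Df x h - D2 h h / 2) / (norm h)\<^sup>2" for h
  have "isCont R 0"
    using taylor_remainder_tendsto[OF f Df] by (simp add: continuous_at R_def[abs_def])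
  moreover have "(\<lambda>k. t k *\<^sub>R v k) \<longlonglongrightarrow> 0"
    using tendsto_scaleR[OF t(2) v] by simp
  ultimately have "(\<lambda>k. D2 (v k) (v k) + 2 * (norm (v k))\<^sup>2 * R (t k *\<^sub>R v k))
      \<longlonglongrightarrow> D2 d d + 2 * (norm d)\<^sup>2 * R 0"
    by (intro tendsto_intros isCont_tendsto_compose[where g=R] v)
  moreover have "2 * (f (x + t k *\<^sub>R v k) - f x) / (t k)\<^sup>2 - Df x ((2 / t k) *\<^sub>R (v k - d))
      = D2 (v k) (v k) + 2 * (norm (v k))\<^sup>2 * R (t k *\<^sub>R v k)" for k
  proof -
    have expansion: "f (x + h) - f x = Df x h + D2 h h / 2 + (norm h)\<^sup>2 * R h" for h
      by (cases "h = 0") (simp_all add: R_def)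
    show ?thesis
      using t(1)[of k] critical unfolding expansion
      by (simp add: blinfun.scaleR_left blinfun.scaleR_right blinfun.diff_right field_simps power2_eq_square)
  qed
  ultimately show ?thesis
    by (simp add: R_def)
qed

section \<open>Approach sequences and second-order tangent sets\<close>

definition approach_seq ::
    "'a::real_normed_vector set \<Rightarrow> 'a \<Rightarrow> (nat \<Rightarrow> real) \<Rightarrow> (nat \<Rightarrow> 'a) \<Rightarrow> 'a \<Rightarrow> bool"
  where "approach_seq P x t v d \<longleftrightarrow>
    (\<forall>k. t k > 0 \<and> norm (v k) = 1 \<and> x + t k *\<^sub>R v k \<in> P) \<and> t \<longlonglongrightarrow> 0 \<and> v \<longlonglongrightarrow> d"

lemma approach_seq_subseq:
  assumes "approach_seq P x t v d" and "strict_mono r"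
  shows "approach_seq P x (t \<circ> r) (v \<circ> r) d"
  using assms unfolding approach_seq_def by (auto intro: LIMSEQ_subseq_LIMSEQ)

lemma approach_seq_norm:
  assumes "approach_seq P x t v d"
  shows "norm d = 1"
proof -
  have "(\<lambda>k. norm (v k)) \<longlonglongrightarrow> norm d"
    using assms unfolding approach_seq_def by (intro tendsto_intros) auto
  moreover have "(\<lambda>k. norm (v k)) = (\<lambda>k. 1)"
    using assms unfolding approach_seq_def by auto
  ultimately show ?thesis
    by (simp add: LIMSEQ_const_iff)
qed

lemma approach_seq_tangent_cone:
  assumes "approach_seq P x t v d"
  shows "d \<in> tangent_cone P x"
  using assms unfolding approach_seq_def tangent_cone_def by blast

lemma convergent_or_escaping_subseq:
  fixes w :: "nat \<Rightarrow> 'a::{real_normed_vector,heine_borel}"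
  obtains r W where "strict_mono r" "(w \<circ> r) \<longlonglongrightarrow> W"
  | r \<mu> where "strict_mono r" "(\<lambda>k. 1 / (1 + norm (w (r k)))) \<longlonglongrightarrow> 0"
      "(\<lambda>k. w (r k) /\<^sub>R (1 + norm (w (r k)))) \<longlonglongrightarrow> \<mu>" "\<mu> \<noteq> 0"
proof -
  \<comment> \<open>Scaling by \<open>1 / (1 + norm (w k))\<close> instead of \<open>1 / norm (w k)\<close> keeps the factors positive
    and bounded, so one compactness argument on the pairs covers both cases.\<close>
  define a where "a k = 1 / (1 + norm (w k))" for k
  have a_pos: "a k > 0" for k
    by (simp add: a_def add_pos_nonneg)
  have norm_aw: "norm (a k *\<^sub>R w k) = 1 - a k" for k
    using a_pos[of k] by (simp add: a_def field_simps)
  have "norm (a k, a k *\<^sub>R w k) \<le> 2" for k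
    using norm_Pair_le[of "a k" "a k *\<^sub>R w k"] a_pos[of k] norm_aw[of k] by simp
  then obtain r \<alpha> \<mu> where r: "strict_mono r" and lim: "((\<lambda>k. (a k, a k *\<^sub>R w k)) \<circ> r) \<longlonglongrightarrow> (\<alpha>, \<mu>)"
    using bounded_imp_convergent_subsequence[of "\<lambda>k. (a k, a k *\<^sub>R w k)"]
    unfolding bounded_iff by (metis (no_types, lifting) rangeE surj_pair)
  have \<alpha>: "(\<lambda>k. a (r k)) \<longlonglongrightarrow> \<alpha>" and \<mu>: "(\<lambda>k. a (r k) *\<^sub>R w (r k)) \<longlonglongrightarrow> \<mu>"
    using tendsto_fst[OF lim] tendsto_snd[OF lim] by (simp_all add: comp_def)
  show ?thesis
  proof (cases "\<alpha> = 0")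
    case True
    have "(\<lambda>k. norm (a (r k) *\<^sub>R w (r k))) \<longlonglongrightarrow> 1 - \<alpha>"
      unfolding norm_aw by (intro tendsto_intros \<alpha>)
    then have "\<mu> \<noteq> 0"
      using tendsto_norm[OF \<mu>] True LIMSEQ_unique by fastforce
    moreover have "(\<lambda>k. 1 / (1 + norm (w (r k)))) \<longlonglongrightarrow> 0"
      using \<alpha> True by (simp add: a_def)
    moreover have "(\<lambda>k. w (r k) /\<^sub>R (1 + norm (w (r k)))) \<longlonglongrightarrow> \<mu>"
      using \<mu> by (simp add: a_def flip: inverse_eq_divide)
    ultimately show ?thesis
      using that(2)[OF r] by blast
  next
    case False
    have "(\<lambda>k. (1 / a (r k)) *\<^sub>R (a (r k) *\<^sub>R w (r k))) \<longlonglongrightarrow> (1 / \<alpha>) *\<^sub>R \<mu>"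
      by (intro tendsto_intros \<alpha> \<mu> False)
    moreover have "(1 / a (r k)) *\<^sub>R (a (r k) *\<^sub>R w (r k)) = w (r k)" for k
      using a_pos[of "r k"] by simp
    ultimately show ?thesis
      using that(1)[OF r] by (simp add: comp_def)
  qed
qed

lemma approach_seq_second_order_feasible:
  assumes "approach_seq P x t v d"
  shows "x + t k *\<^sub>R d + ((1/2) * (t k)\<^sup>2) *\<^sub>R ((2 / t k) *\<^sub>R (v k - d)) \<in> P"
proof -
  have "t k > 0" "x + t k *\<^sub>R v k \<in> P"
    using assms unfolding approach_seq_def by auto
  then show ?thesis
    by (simp add: power2_eq_square scaleR_diff_right)
qed

lemma approach_seq_inner_second_order:
  fixes P :: "'a::real_inner set"
  assumes "approach_seq P x t v d"
  shows "inner d ((2 / t k) *\<^sub>R (v k - d)) = - t k / 4 * (norm ((2 / t k) *\<^sub>R (v k - d)))\<^sup>2"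
proof -
  have "inner (v k) (v k) = 1" "t k > 0"
    using assms unfolding approach_seq_def by (auto simp: norm_eq_1[symmetric])
  moreover have "inner d d = 1"
    using approach_seq_norm[OF assms] by (simp add: norm_eq_1[symmetric])
  ultimately have "(norm (v k - d))\<^sup>2 = 2 * (1 - inner d (v k))"
    by (simp add: power2_norm_eq_inner inner_diff_left inner_diff_right inner_commute)
  moreover have "norm ((2 / t k) *\<^sub>R (v k - d)) = 2 / t k * norm (v k - d)"
    using \<open>t k > 0\<close> by simp
  ultimately show ?thesis
    using \<open>t k > 0\<close> \<open>inner d d = 1\<close>
    by (simp only: power_mult_distrib) (simp add: inner_diff_right field_simps power2_eq_square)
qed

lemma approach_seq_second_tangent_set:
  fixes P :: "'a::real_inner set"
  assumes seq: "approach_seq P x t v d" and W: "(\<lambda>k. (2 / t k) *\<^sub>R (v k - d)) \<longlonglongrightarrow> W"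
  shows "W \<in> second_tangent_set P x d" and "inner d W = 0"
proof -
  define w where "w k = (2 / t k) *\<^sub>R (v k - d)" for k
  show "W \<in> second_tangent_set P x d"
    using seq W approach_seq_second_order_feasible[OF seq]
    unfolding approach_seq_def second_tangent_set_def by blast
  have "(\<lambda>k. - t k / 4 * (norm (w k))\<^sup>2) \<longlonglongrightarrow> - 0 / 4 * (norm W)\<^sup>2"
    using seq W[folded w_def] unfolding approach_seq_def by (intro tendsto_intros) auto
  then have "(\<lambda>k. inner d (w k)) \<longlonglongrightarrow> 0"
    using approach_seq_inner_second_order[OF seq, folded w_def] by simp
  moreover have "(\<lambda>k. inner d (w k)) \<longlonglongrightarrow> inner d W"
    using W[folded w_def] by (intro tendsto_intros)
  ultimately show "inner d W = 0"
    using LIMSEQ_unique by blast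
qed

lemma approach_seq_asymp_second_tangent_cone:
  fixes P :: "'a::real_inner set"
  assumes seq: "approach_seq P x t v d"
    and a: "\<And>k. a k > 0" "a \<longlonglongrightarrow> 0" "(\<lambda>k. t k / a k) \<longlonglongrightarrow> 0"
    and \<mu>: "(\<lambda>k. a k *\<^sub>R ((2 / t k) *\<^sub>R (v k - d))) \<longlonglongrightarrow> \<mu>"
  shows "\<mu> \<in> asymp_second_tangent_cone P x d" and "inner d \<mu> = 0"
proof -
  define w where "w k = (2 / t k) *\<^sub>R (v k - d)" for k
  define u where "u k = a k *\<^sub>R w k" for k
  have t: "\<And>k. t k > 0" "t \<longlonglongrightarrow> 0"
    using seq unfolding approach_seq_def by auto
  have u: "u \<longlonglongrightarrow> \<mu>"
    using \<mu> by (simp only: u_def[abs_def] w_def)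
  have "x + t k *\<^sub>R d + ((1/2) * t k * (t k / a k)) *\<^sub>R u k \<in> P" for k
    using approach_seq_second_order_feasible[OF seq, of k, folded w_def] a(1)[of k]
    by (simp add: u_def power2_eq_square)
  moreover have "t k / (t k / a k) = a k" for k
    using t(1)[of k] a(1)[of k] by simp
  ultimately show "\<mu> \<in> asymp_second_tangent_cone P x d"
    unfolding asymp_second_tangent_cone_def using t a u
    by (intro CollectI exI[of _ t] exI[of _ "\<lambda>k. t k / a k"] exI[of _ u]) simp
  have "inner d (u k) = - 1 / 4 * (t k / a k) * (norm (u k))\<^sup>2" for k
    using approach_seq_inner_second_order[OF seq, of k, folded w_def] t(1)[of k] a(1)[of k]
    by (simp add: u_def power2_eq_square field_simps)
  moreover have "(\<lambda>k. - 1 / 4 * (t k / a k) * (norm (u k))\<^sup>2) \<longlonglongrightarrow> - 1 / 4 * 0 * (norm \<mu>)\<^sup>2"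
    using a(3) u by (intro tendsto_intros)
  ultimately have "(\<lambda>k. inner d (u k)) \<longlonglongrightarrow> 0"
    by simp
  moreover have "(\<lambda>k. inner d (u k)) \<longlonglongrightarrow> inner d \<mu>"
    using u by (intro tendsto_intros)
  ultimately show "inner d \<mu> = 0"
    using LIMSEQ_unique by blast
qed

(* The slower scale of the asymptotic second-order tangent cone in the escaping case. *)
lemma approach_seq_escaping_scale:
  assumes "approach_seq P x t v d"
  shows "(\<lambda>k. t k * (1 + norm ((2 / t k) *\<^sub>R (v k - d)))) \<longlonglongrightarrow> 0"
proof -
  have "t k * (1 + norm ((2 / t k) *\<^sub>R (v k - d))) = t k + 2 * norm (v k - d)" for k
  proof -
    have "t k > 0"
      using assms unfolding approach_seq_def by simp
    then show ?thesis
      by (simp add: distrib_left)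
  qed
  moreover have "(\<lambda>k. t k + 2 * norm (v k - d)) \<longlonglongrightarrow> 0 + 2 * norm (d - d)"
    using assms unfolding approach_seq_def by (intro tendsto_intros) auto
  ultimately show ?thesis
    by simp
qed

lemma approach_seq_second_order_tangent_cases:
  fixes P :: "'a::euclidean_space set" and A :: "'a \<Rightarrow>\<^sub>L real"
  assumes seq: "approach_seq P x t v d"
    and bound: "\<And>k. A ((2 / t k) *\<^sub>R (v k - d)) \<le> s k" and s: "s \<longlonglongrightarrow> \<sigma>"
  obtains W where "W \<in> second_tangent_set P x d" "inner d W = 0" "A W \<le> \<sigma>"
  | \<mu> where "\<mu> \<in> asymp_second_tangent_cone P x d" "inner d \<mu> = 0" "\<mu> \<noteq> 0" "A \<mu> \<le> 0"
proof -
  define w where "w k = (2 / t k) *\<^sub>R (v k - d)" for k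
  show thesis
  proof (rule convergent_or_escaping_subseq[of w])
    fix r W assume r: "strict_mono r" and W: "(w \<circ> r) \<longlonglongrightarrow> W"
    have "(\<lambda>k. (2 / (t \<circ> r) k) *\<^sub>R ((v \<circ> r) k - d)) \<longlonglongrightarrow> W"
      using W by (simp add: w_def comp_def)
    note W_tangent = approach_seq_second_tangent_set[OF approach_seq_subseq[OF seq r] this]
    have "(\<lambda>k. A (w (r k))) \<longlonglongrightarrow> A W"
      using W by (intro tendsto_intros) (simp add: comp_def)
    then have "A W \<le> \<sigma>"
      using LIMSEQ_subseq_LIMSEQ[OF s r] bound by (intro LIMSEQ_le) (auto simp: w_def)
    with W_tangent show thesis
      using that(1) by blast
  next
    fix r \<mu> assume r: "strict_mono r"
      and a: "(\<lambda>k. 1 / (1 + norm (w (r k)))) \<longlonglongrightarrow> 0"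
      and \<mu>: "(\<lambda>k. w (r k) /\<^sub>R (1 + norm (w (r k)))) \<longlonglongrightarrow> \<mu>" and "\<mu> \<noteq> 0"
    have seq_r: "approach_seq P x (t \<circ> r) (v \<circ> r) d"
      using approach_seq_subseq[OF seq r] .
    define a where "a k = 1 / (1 + norm (w (r k)))" for k
    have a_pos: "a k > 0" for k
      by (simp add: a_def add_pos_nonneg)
    have "(\<lambda>k. (t \<circ> r) k / a k) \<longlonglongrightarrow> 0"
      using approach_seq_escaping_scale[OF seq_r] by (simp add: a_def w_def)
    moreover have "(\<lambda>k. a k *\<^sub>R ((2 / (t \<circ> r) k) *\<^sub>R ((v \<circ> r) k - d))) \<longlonglongrightarrow> \<mu>"
      using \<mu> by (simp add: a_def w_def divide_inverse_commute)
    ultimately have \<mu>_tangent: "\<mu> \<in> asymp_second_tangent_cone P x d" "inner d \<mu> = 0"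
      using approach_seq_asymp_second_tangent_cone[OF seq_r a_pos] a
      by (simp_all add: a_def[abs_def])
    have "(\<lambda>k. A (a k *\<^sub>R w (r k))) \<longlonglongrightarrow> A \<mu>"
      using \<mu> by (intro tendsto_intros) (simp add: a_def divide_inverse_commute)
    moreover have "(\<lambda>k. a k * s (r k)) \<longlonglongrightarrow> 0 * \<sigma>"
      using a LIMSEQ_subseq_LIMSEQ[OF s r] by (intro tendsto_intros) (simp_all add: a_def comp_def)
    moreover have "A (a k *\<^sub>R w (r k)) \<le> a k * s (r k)" for k
      using bound[of "r k", folded w_def] a_pos[of k] by (simp add: blinfun.scaleR_right mult_left_mono)
    ultimately have "A \<mu> \<le> 0"
      by (intro LIMSEQ_le) auto
    with \<mu>_tangent \<open>\<mu> \<noteq> 0\<close> show thesis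
      using that(2) by blast
  qed
qed

section \<open>Second-order sufficient conditions\<close>

definition quadratic_growth :: "('a::real_normed_vector \<Rightarrow> real) \<Rightarrow> 'a set \<Rightarrow> 'a \<Rightarrow> bool"
  where "quadratic_growth f P x \<longleftrightarrow>
    (\<exists>\<kappa>>0. \<exists>\<delta>>0. \<forall>y\<in>P. norm (y - x) < \<delta> \<longrightarrow> f x + \<kappa> * (norm (y - x))\<^sup>2 \<le> f y)"

lemma approach_seq_of_not_quadratic_growth:
  fixes f :: "'a::{real_normed_vector,heine_borel} \<Rightarrow> real"
  assumes "\<not> quadratic_growth f P x"
  obtains t v d e where "approach_seq P x t v d" "e \<longlonglongrightarrow> 0"
    "\<And>k. f (x + t k *\<^sub>R v k) - f x \<le> e k * (t k)\<^sup>2"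
proof -
  have "\<exists>y\<in>P. norm (y - x) < 1 / Suc k \<and> f y < f x + 1 / Suc k * (norm (y - x))\<^sup>2" for k
  proof (rule ccontr)
    assume "\<not> ?thesis"
    then have "\<forall>y\<in>P. norm (y - x) < 1 / Suc k \<longrightarrow> f x + 1 / Suc k * (norm (y - x))\<^sup>2 \<le> f y"
      by (auto simp: not_less)
    moreover have "(0::real) < 1 / Suc k"
      by simp
    ultimately have "quadratic_growth f P x"
      unfolding quadratic_growth_def by blast
    with assms show False ..
  qed
  then obtain y where y: "\<And>k. y k \<in> P" "\<And>k. norm (y k - x) < 1 / Suc k"
    and descent: "\<And>k. f (y k) < f x + 1 / Suc k * (norm (y k - x))\<^sup>2"
    by metis
  define t where "t k = norm (y k - x)" for k
  define v where "v k = (y k - x) /\<^sub>R t k" for k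
  have t_pos: "t k > 0" for k
    using descent[of k] by (auto simp: t_def)
  have y_eq: "y k = x + t k *\<^sub>R v k" for k
    using t_pos[of k] by (simp add: v_def)
  have inverse_Suc: "(\<lambda>k. 1 / Suc k) \<longlonglongrightarrow> 0"
    using LIMSEQ_Suc[OF lim_inverse_n'] by simp
  have "\<forall>k. norm (t k) \<le> 1 / Suc k"
    using y(2) by (simp add: t_def less_imp_le)
  from Lim_null_comparison[OF always_eventually[OF this] inverse_Suc]
  have "t \<longlonglongrightarrow> 0" .
  have "norm (v k) = 1" for k
    using t_pos[of k] by (simp add: v_def t_def[symmetric])
  then have "bounded (range v)"
    unfolding bounded_iff by (intro exI[of _ 1]) auto
  then obtain r d where r: "strict_mono r" and "(v \<circ> r) \<longlonglongrightarrow> d"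
    using bounded_imp_convergent_subsequence by blast
  then have "approach_seq P x (t \<circ> r) (v \<circ> r) d"
    using LIMSEQ_subseq_LIMSEQ[OF \<open>t \<longlonglongrightarrow> 0\<close> r] t_pos y(1)[unfolded y_eq] \<open>\<And>k. norm (v k) = 1\<close>
    unfolding approach_seq_def by simp
  moreover have "(\<lambda>k. 1 / Suc (r k)) \<longlonglongrightarrow> 0"
    using LIMSEQ_subseq_LIMSEQ[OF inverse_Suc r] by (simp add: comp_def)
  moreover have "f (x + (t \<circ> r) k *\<^sub>R (v \<circ> r) k) - f x \<le> 1 / Suc (r k) * ((t \<circ> r) k)\<^sup>2" for k
    using descent[of "r k", folded t_def] by (simp add: y_eq[symmetric])
  ultimately show ?thesis
    by (rule that)
qed

lemma quadratic_growth_of_second_order_conditions: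
  fixes f :: "'a::euclidean_space \<Rightarrow> real" and Df :: "'a \<Rightarrow> 'a \<Rightarrow>\<^sub>L real"
  assumes f: "\<And>y. (f has_derivative Df y) (at y)"
    and Df: "(Df has_derivative blinfun_apply D2) (at x)"
    and first_order: "\<And>d. d \<in> tangent_cone P x \<Longrightarrow> Df x d \<ge> 0"
    and asymp: "\<And>d u. d \<in> tangent_cone P x \<Longrightarrow> d \<noteq> 0 \<Longrightarrow> Df x d = 0 \<Longrightarrow>
      u \<in> asymp_second_tangent_cone P x d \<Longrightarrow> inner d u = 0 \<Longrightarrow> u \<noteq> 0 \<Longrightarrow> Df x u > 0"
    and second: "\<And>d w. d \<in> tangent_cone P x \<Longrightarrow> d \<noteq> 0 \<Longrightarrow> Df x d = 0 \<Longrightarrow>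
      w \<in> second_tangent_set P x d \<Longrightarrow> inner d w = 0 \<Longrightarrow> D2 d d + Df x w > 0"
  shows "quadratic_growth f P x"
proof (rule ccontr)
  assume "\<not> ?thesis"
  then obtain t v d e where seq: "approach_seq P x t v d" and e: "e \<longlonglongrightarrow> 0"
    and descent: "\<And>k. f (x + t k *\<^sub>R v k) - f x \<le> e k * (t k)\<^sup>2"
    by (rule approach_seq_of_not_quadratic_growth) auto
  have t: "\<And>k. t k > 0" "t \<longlonglongrightarrow> 0" and v: "v \<longlonglongrightarrow> d"
    using seq unfolding approach_seq_def by auto
  have d: "d \<in> tangent_cone P x" "d \<noteq> 0"
    using approach_seq_tangent_cone[OF seq] approach_seq_norm[OF seq] by auto
  have "(f (x + t k *\<^sub>R v k) - f x) /\<^sub>R t k \<le> e k * t k" for k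
    using descent[of k] t(1)[of k]
    by (simp add: divide_inverse_commute[symmetric] pos_divide_le_eq power2_eq_square mult.assoc)
  moreover have "(\<lambda>k. e k * t k) \<longlonglongrightarrow> 0 * 0"
    using e t(2) by (rule tendsto_mult)
  ultimately have "Df x d \<le> 0 * 0"
    by (intro LIMSEQ_le[OF difference_quotient_tendsto[OF f[of x] t v]]) auto
  with first_order[OF d(1)] have critical: "Df x d = 0"
    by simp
  define c where "c k = 2 * (f (x + t k *\<^sub>R v k) - f x) / (t k)\<^sup>2 - Df x ((2 / t k) *\<^sub>R (v k - d))" for k
  have limit: "(\<lambda>k. 2 * e k - c k) \<longlonglongrightarrow> 2 * 0 - D2 d d"
    using second_order_difference_quotient_tendsto[OF f Df t v critical] e
    unfolding c_def[abs_def] by (intro tendsto_intros)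
  have bound: "Df x ((2 / t k) *\<^sub>R (v k - d)) \<le> 2 * e k - c k" for k
    using descent[of k] t(1)[of k] by (simp add: c_def pos_divide_le_eq)
  show False
  proof (rule approach_seq_second_order_tangent_cases[OF seq bound limit])
    fix W assume "W \<in> second_tangent_set P x d" "inner d W = 0" "Df x W \<le> 2 * 0 - D2 d d"
    then show False
      using second[OF d critical] by fastforce
  next
    fix \<mu> assume "\<mu> \<in> asymp_second_tangent_cone P x d" "inner d \<mu> = 0" "\<mu> \<noteq> 0" "Df x \<mu> \<le> 0"
    then show False
      using asymp[OF d critical] by fastforce
  qed
qed

lemma inner_less_of_support_fun_gap:
  assumes "ereal a - support_fun A l > 0" and "u \<in> A"
  shows "inner l u < a"
proof -
  have "ereal (inner l u) \<le> support_fun A l"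
    unfolding support_fun_def using assms(2) by (rule SUP_upper)
  with assms(1) show ?thesis
    by (cases "support_fun A l") auto
qed

lemma local_so_weak_sharp_min_of_quadratic_growth:
  assumes xb: "xb \<in> optimal_set f g K" and growth: "quadratic_growth f (feasible g K) xb"
  shows "local_so_weak_sharp_min f g K xb"
proof -
  obtain \<kappa> \<delta> where "\<kappa> > 0" "\<delta> > 0"
    and growth: "\<And>x. x \<in> feasible g K \<Longrightarrow> norm (x - xb) < \<delta> \<Longrightarrow> f xb + \<kappa> * (norm (x - xb))\<^sup>2 \<le> f x"
    using growth unfolding quadratic_growth_def by blast
  have "f x \<ge> f xb + \<kappa> * (infdist x (optimal_set f g K))\<^sup>2" if x: "x \<in> feasible g K \<inter> ball xb \<delta>" for x
  proof -
    have "infdist x (optimal_set f g K) \<le> norm (x - xb)"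
      using infdist_le[OF xb] by (simp add: dist_norm)
    then have "\<kappa> * (infdist x (optimal_set f g K))\<^sup>2 \<le> \<kappa> * (norm (x - xb))\<^sup>2"
      using \<open>\<kappa> > 0\<close> by (simp add: power_mono infdist_nonneg)
    moreover have "f xb + \<kappa> * (norm (x - xb))\<^sup>2 \<le> f x"
      using growth x by (simp add: dist_norm norm_minus_commute)
    ultimately show ?thesis
      by linarith
  qed
  moreover have "xb \<in> feasible g K"
    using xb unfolding optimal_set_def by blast
  ultimately show ?thesis
    unfolding local_so_weak_sharp_min_def using \<open>\<kappa> > 0\<close> \<open>\<delta> > 0\<close> by blast
qed

lemma quadratic_growth_of_multiplier:
  fixes f :: "'n::euclidean_space \<Rightarrow> real" and g :: "'n \<Rightarrow> 'm::real_inner"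
    and Df :: "'n \<Rightarrow> 'n \<Rightarrow>\<^sub>L real" and D2f :: "'n \<Rightarrow>\<^sub>L 'n \<Rightarrow>\<^sub>L real"
    and Dg :: "'n \<Rightarrow>\<^sub>L 'm" and D2g :: "'n \<Rightarrow>\<^sub>L 'n \<Rightarrow>\<^sub>L 'm"
  assumes f: "\<And>x. (f has_derivative Df x) (at x)"
    and Df: "(Df has_derivative blinfun_apply D2f) (at xb)"
    and g: "(g has_derivative Dg) (at xb)"
    and first_order: "\<forall>d \<in> tangent_cone (feasible g K) xb. Df xb d \<ge> 0"
    and multiplier: "\<exists>l.
      (\<forall>u. Df xb u + inner l (Dg u) = 0) \<and>
      (\<forall>d \<in> critical_cone (Df xb) Dg K (g xb) - {0}.
        (\<forall>v \<in> Dg ` (asymp_second_tangent_cone (feasible g K) xb d \<inter> ({w. inner d w = 0} - {0})).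
           inner l v < 0) \<and>
        ereal (D2f d d + inner l (D2g d d))
          - support_fun {Dg w + D2g d d | w. w \<in> second_tangent_set (feasible g K) xb d \<and> inner d w = 0} l > 0)"
  shows "quadratic_growth f (feasible g K) xb"
proof -
  obtain l where lagrangian: "\<forall>u. Df xb u + inner l (Dg u) = 0"
    and conditions: "\<forall>d \<in> critical_cone (Df xb) Dg K (g xb) - {0}.
      (\<forall>v \<in> Dg ` (asymp_second_tangent_cone (feasible g K) xb d \<inter> ({w. inner d w = 0} - {0})).
         inner l v < 0) \<and>
      ereal (D2f d d + inner l (D2g d d))
        - support_fun {Dg w + D2g d d | w. w \<in> second_tangent_set (feasible g K) xb d \<and> inner d w = 0} l > 0"
    using multiplier by blast
  have lagrange: "Df xb u = - inner l (Dg u)" for u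
    using lagrangian by (simp add: eq_neg_iff_add_eq_0)
  have critical: "d \<in> critical_cone (Df xb) Dg K (g xb) - {0}"
    if "d \<in> tangent_cone (feasible g K) xb" "d \<noteq> 0" "Df xb d = 0" for d
  proof -
    have "Dg d \<in> tangent_cone K (g xb)"
      using tangent_cone_preimage[OF g that(1)[unfolded feasible_def]] .
    with that(2,3) show ?thesis
      by (simp add: critical_cone_def)
  qed
  show ?thesis
  proof (rule quadratic_growth_of_second_order_conditions[OF f Df])
    fix d u assume d: "d \<in> tangent_cone (feasible g K) xb" "d \<noteq> 0" "Df xb d = 0"
      and u: "u \<in> asymp_second_tangent_cone (feasible g K) xb d" "inner d u = 0" "u \<noteq> 0"
    then have "u \<in> asymp_second_tangent_cone (feasible g K) xb d \<inter> ({w. inner d w = 0} - {0})"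
      by simp
    then have "inner l (Dg u) < 0"
      using bspec[OF conditions critical[OF d]] by blast
    then show "Df xb u > 0"
      by (simp add: lagrange)
  next
    fix d w assume d: "d \<in> tangent_cone (feasible g K) xb" "d \<noteq> 0" "Df xb d = 0"
      and w: "w \<in> second_tangent_set (feasible g K) xb d" "inner d w = 0"
    then have "inner l (Dg w + D2g d d) < D2f d d + inner l (D2g d d)"
      using bspec[OF conditions critical[OF d]] by (intro inner_less_of_support_fun_gap) auto
    then show "D2f d d + Df xb w > 0"
      using lagrange[of w] by (simp add: inner_add_right)
  qed (use first_order in auto)
qed

theorem theorem4p6:
  fixes f :: "real^'n \<Rightarrow> real" and g :: "real^'n \<Rightarrow> real^'m" and K :: "(real^'m) set"
    and Df :: "real^'n \<Rightarrow> ((real^'n) \<Rightarrow>\<^sub>L real)"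
    and D2f :: "real^'n \<Rightarrow> ((real^'n) \<Rightarrow>\<^sub>L ((real^'n) \<Rightarrow>\<^sub>L real))"
    and Dg :: "real^'n \<Rightarrow> ((real^'n) \<Rightarrow>\<^sub>L (real^'m))"
    and D2g :: "real^'n \<Rightarrow> ((real^'n) \<Rightarrow>\<^sub>L ((real^'n) \<Rightarrow>\<^sub>L (real^'m)))"
    and xb :: "real^'n"
  assumes f_d1: "\<And>x. (f has_derivative blinfun_apply (Df x)) (at x)"
    and f_d2: "\<And>x. (Df has_derivative blinfun_apply (D2f x)) (at x)"
    and f_c2: "continuous_on UNIV D2f"
    and g_d1: "\<And>x. (g has_derivative blinfun_apply (Dg x)) (at x)"
    and g_d2: "\<And>x. (Dg has_derivative blinfun_apply (D2g x)) (at x)"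
    and g_c2: "continuous_on UNIV D2g"
    and K_closed: "closed K"
    and xb_S: "xb \<in> optimal_set f g K"
    and isolated: "\<exists>r>0. optimal_set f g K \<inter> ball xb r = {xb}"
    and first_order: "\<forall>d \<in> tangent_cone (feasible g K) xb. blinfun_apply (Df xb) d \<ge> 0"
    and multiplier: "\<exists>l :: real^'m.
        (\<forall>u. blinfun_apply (Df xb) u + inner l (blinfun_apply (Dg xb) u) = 0) \<and>
        (\<forall>d \<in> critical_cone (Df xb) (Dg xb) K (g xb) - {0}.
           (\<forall>v \<in> blinfun_apply (Dg xb) `
                   (asymp_second_tangent_cone (feasible g K) xb d \<inter> ({w. inner d w = 0} - {0})).
               inner l v < 0) \<and>
           ereal (blinfun_apply (blinfun_apply (D2f xb) d) d
                  + inner l (blinfun_apply (blinfun_apply (D2g xb) d) d))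
             - support_fun {blinfun_apply (Dg xb) w + blinfun_apply (blinfun_apply (D2g xb) d) d | w.
                              w \<in> second_tangent_set (feasible g K) xb d \<and> inner d w = 0} l > 0)"
  shows "local_so_weak_sharp_min f g K xb"
proof -
  have "quadratic_growth f (feasible g K) xb"
    using f_d1 f_d2 g_d1 first_order multiplier by (rule quadratic_growth_of_multiplier)
  with xb_S show ?thesis
    by (rule local_so_weak_sharp_min_of_quadratic_growth)
qed

end
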